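(* Let $n\geq 3$. For every triangulation $T\in\mathcal{T}_n$ there exists $T'\in\mathcal{T}^{(3)}_n$ such that $T\rhd T'$.
   Context: Label the vertices of a convex $n$-gon by $1,\dots,n$ in cyclic order; $\mathrm{Diag}_n = \{\{i,j\} \subseteq [n]: i-j\not\equiv \pm1 \pmod n\}$; two diagonals cross if they meet in the interior of the polygon (their four endpoints are distinct and interleave cyclically). A triangulation is identified with its set of diagonals, and $\mathcal{T}_n$ is the set of triangulations. Swapping relation: for $\{i,j\},\{i',j'\}\in\mathrm{Diag}_n$ written with $i<j$ and $i'<j'$, write $\{i,j\}\rhd\{i',j'\}$ if either $\{i,j\}$ and $\{i',j'\}$ do not cross (in particular $d\rhd d$ for every $d$), or $i'<i<j'<j<n$ and $j'-i>1$. For $T,T'\in\mathcal{T}_n$, write $T\rhd T'$ if $d\rhd d'$ for all $d\in T$ and $d'\in T'$. A parenthesization of an ordered list of symbols $\sigma_1,\dots,\sigma_m$ is a way to insert parentheses into $\sigma_1\sigma_2\cdots\sigma_m$ so that it is read as $m-1$ applications of a binary product. $k$-parenthesizations are defined recursively: a $0$-parenthesization is a single symbol. For odd $k\geq 1$, a $k$-parenthesization is one of the form $\pi_1(\pi_2(\cdots(\pi_{\ell-1}(\pi_\ell\sigma))\cdots))$ with $\ell \geq 0$, $\sigma$ a single symbol and $\pi_1,\dots,\pi_\ell$ $(k-1)$-parenthesizations (of consecutive blocks of symbols). For even $k \geq 2$, a $k$-parenthesization is one of the form $(\cdots((\sigma\pi_1)\pi_2)\cdots\pi_{\ell-1})\pi_\ell$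 with $\ell\ge 0$, $\sigma$ a single symbol and $\pi_i$ $(k-1)$-parenthesizations. Triangulations $T\in\mathcal{T}_n$ are in bijection with parenthesizations of $\sigma_1,\dots,\sigma_{n-1}$: $T$ corresponds to the unique parenthesization in which, for every triangle $\{i,j,k\}$ of $T$ with $i<j<k$ (triangles may use sides of the polygon), the product $\sigma_i\cdots\sigma_{k-1}$ is formed by multiplying $\sigma_i\cdots\sigma_{j-1}$ and $\sigma_j\cdots\sigma_{k-1}$. $\mathcal{T}^{(k)}_n$ is the set of triangulations corresponding to $k$-parenthesizations under this bijection. *)

theory Defs
  imports Main
begin

text \<open>Vertices of the convex n-gon are 1..n in cyclic order. A diagonal is a
  two-element set {i,j} of vertices that are not cyclically adjacent.\<close>

definition Diag :: "nat \<Rightarrow> nat set set" where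
  "Diag n = {{i, j} | i j. 1 \<le> i \<and> i < j \<and> j \<le> n \<and> j - i \<noteq> 1 \<and> j - i \<noteq> n - 1}"

definition crosses :: "nat set \<Rightarrow> nat set \<Rightarrow> bool" where
  "crosses d e \<longleftrightarrow> (\<exists>i j i' j'. d = {i, j} \<and> e = {i', j'} \<and> i < j \<and> i' < j' \<and>
      ((i < i' \<and> i' < j \<and> j < j') \<or> (i' < i \<and> i < j' \<and> j' < j)))"

definition triangulations :: "nat \<Rightarrow> nat set set set" where
  "triangulations n = {T. T \<subseteq> Diag n \<and> (\<forall>d\<in>T. \<forall>e\<in>T. \<not> crosses d e) \<and>
      (\<forall>d\<in>Diag n - T. \<exists>e\<in>T. crosses d e)}"

definition dswap :: "nat \<Rightarrow> nat set \<Rightarrow> nat set \<Rightarrow> bool" where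
  "dswap n d e \<longleftrightarrow> \<not> crosses d e \<or>
     (\<exists>i j i' j'. d = {i, j} \<and> e = {i', j'} \<and> i < j \<and> i' < j' \<and>
        i' < i \<and> i < j' \<and> j' < j \<and> j < n \<and> j' - i > 1)"

definition tswap :: "nat \<Rightarrow> nat set set \<Rightarrow> nat set set \<Rightarrow> bool" where
  "tswap n T T' \<longleftrightarrow> (\<forall>d\<in>T. \<forall>d'\<in>T'. dswap n d d')"

text \<open>Parenthesizations as binary trees: Leaf is a single symbol, Node l r is
  the product of l and r.\<close>
datatype ptree = Leaf | Node ptree ptree

fun leaves :: "ptree \<Rightarrow> nat" where
  "leaves Leaf = 1"
| "leaves (Node l r) = leaves l + leaves r"

text \<open>For odd k: Leaf or Node pi t with pi a (k-1)-
  parenthesization and t a k-parenthesization (right comb pi_1(pi_2(...(pi_l sigma))));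
  for even k >= 2: Leaf or Node t pi (left comb).\<close>
fun kpar :: "nat \<Rightarrow> ptree \<Rightarrow> bool" where
  "kpar 0 t = (t = Leaf)"
| "kpar (Suc k) Leaf = True"
| "kpar (Suc k) (Node l r) =
     (if odd (Suc k) then kpar k l \<and> kpar (Suc k) r else kpar (Suc k) l \<and> kpar k r)"

text \<open>Diagonal-like pairs {a, a+m} for every product node spanning the symbols
  sigma_a .. sigma_(a+m-1), the tree starting at symbol position a.\<close>
fun tdiags :: "nat \<Rightarrow> ptree \<Rightarrow> nat set set" where
  "tdiags a Leaf = {}"
| "tdiags a (Node l r) =
     insert {a, a + leaves l + leaves r} (tdiags a l \<union> tdiags (a + leaves l) r)"

text \<open>The triangulation of the polygon corresponding to a parenthesization of
  sigma_1..sigma_(n-1) (the root node spans the polygon side {1,n}, which is removed).\<close>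
definition tri_of :: "ptree \<Rightarrow> nat set set" where
  "tri_of t = tdiags 1 t - {{1, 1 + leaves t}}"

definition ktriangulations :: "nat \<Rightarrow> nat \<Rightarrow> nat set set set" where
  "ktriangulations k n = {tri_of t | t. leaves t = n - 1 \<and> kpar k t}"

end

theory Submission
  imports Defs
begin

text \<open>
  Call v a fan vertex if
  {v, n} is in T (or v = n - 1). The 3-parenthesization is the right comb over the blocks
  [a, b] between consecutive fan vertices, starting at 1; its diagonals {v, n} run along
  the fan of n in T and cross nothing. Inside a block the 2-parenthesization is a left comb
  cut at the split vertices y, those for which no diagonal of T leaves y - 1 beyond y, and
  each piece is a right comb. A diagonal {i, j} of T crossing a diagonal {p, y} of a block
  from the left would have to cross a fan diagonal of T or a diagonal leaving j - 1, so any
  crossing has the form p < i < y < j; then j < n because i is no fan vertex, and y > i + 1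
  because y is a split vertex or the fan vertex b, neither of which can be i + 1.
\<close>

lemma kpar_Leaf [simp]: "0 < k \<Longrightarrow> kpar k Leaf"
  by (cases k) simp_all

lemma kpar_2_Node [simp]: "kpar 2 (Node l r) \<longleftrightarrow> kpar 2 l \<and> kpar 1 r"
  by (simp add: numeral_2_eq_2)

lemma kpar_3_Node [simp]: "kpar 3 (Node l r) \<longleftrightarrow> kpar 2 l \<and> kpar 3 r"
  using kpar.simps(3)[of 2 l r] by simp

fun right_comb :: "nat \<Rightarrow> ptree" where
  "right_comb 0 = Leaf"
| "right_comb (Suc 0) = Leaf"
| "right_comb (Suc (Suc m)) = Node Leaf (right_comb (Suc m))"

lemma leaves_right_comb [simp]: "0 < m \<Longrightarrow> leaves (right_comb m) = m"
  by (induction m rule: right_comb.induct) simp_all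

lemma kpar_1_right_comb: "kpar 1 (right_comb m)"
  by (induction m rule: right_comb.induct) simp_all

lemma tdiags_right_comb:
  "tdiags c (right_comb m) \<subseteq> {{x, c + m} | x. c \<le> x \<and> x + 2 \<le> c + m}"
proof (induction m arbitrary: c rule: right_comb.induct)
  case (3 m)
  then show ?case by fastforce
qed simp_all

text \<open>The diagonals of the 2-parenthesization of the block [a, b] cut at the vertices
  satisfying N: the spine {a, y} of the left comb and the right combs ending at the cuts.\<close>

definition kpar2_diags :: "(nat \<Rightarrow> bool) \<Rightarrow> nat \<Rightarrow> nat \<Rightarrow> nat set set" where
  "kpar2_diags N a b = {{p, y} | p y. a \<le> p \<and> p < y \<and> y \<le> b \<and> (N y \<or> y = b \<or> y = p + 1) \<and>
      (p = a \<or> (\<forall>v. p < v \<and> v < y \<longrightarrow> \<not> N v))}"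

lemma kpar2_diagsI:
  "a \<le> p \<Longrightarrow> p < y \<Longrightarrow> y \<le> b \<Longrightarrow> N y \<or> y = b \<or> y = p + 1 \<Longrightarrow>
    p = a \<or> (\<forall>v. p < v \<and> v < y \<longrightarrow> \<not> N v) \<Longrightarrow> {p, y} \<in> kpar2_diags N a b"
  unfolding kpar2_diags_def by blast

lemma kpar2_diags_mono:
  assumes "m < b" and "N m \<or> m = a + 1"
  shows "kpar2_diags N a m \<subseteq> kpar2_diags N a b"
proof
  fix e assume "e \<in> kpar2_diags N a m"
  then obtain p y where e: "e = {p, y}" "a \<le> p" "p < y" "y \<le> m" "N y \<or> y = m \<or> y = p + 1"
    "p = a \<or> (\<forall>v. p < v \<and> v < y \<longrightarrow> \<not> N v)"
    unfolding kpar2_diags_def by blast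
  then have "N y \<or> y = p + 1" "y \<le> b"
    using assms by auto
  with e show "e \<in> kpar2_diags N a b"
    by (auto intro: kpar2_diagsI)
qed

lemma kpar2_exists:
  assumes "a < b"
  shows "\<exists>t. kpar 2 t \<and> leaves t = b - a \<and> tdiags a t \<subseteq> kpar2_diags N a b"
  using assms
proof (induction b rule: less_induct)
  case (less b)
  show ?case
  proof (cases "b = a + 1")
    case True
    then show ?thesis by (intro exI[of _ Leaf]) simp
  next
    case False
    define S where "S = {v. a < v \<and> v < b \<and> (N v \<or> v = a + 1)}"
    have "finite S" "a + 1 \<in> S"
      unfolding S_def using less.prems False by auto
    define m where "m = Max S"
    have m_max: "v \<le> m" if "v \<in> S" for v
      using Max_ge \<open>finite S\<close> that unfolding m_def by blast
    have "m \<in> S"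
      using Max_in \<open>finite S\<close> \<open>a + 1 \<in> S\<close> unfolding m_def by blast
    then have "a < m" "m < b" "N m \<or> m = a + 1"
      unfolding S_def by auto
    obtain l where l: "kpar 2 l" "leaves l = m - a" "tdiags a l \<subseteq> kpar2_diags N a m"
      using less.IH \<open>m < b\<close> \<open>a < m\<close> by blast
    let ?r = "right_comb (b - m)"
    have "tdiags m ?r \<subseteq> kpar2_diags N a b"
    proof -
      have "\<not> N v" if "m < v" "v < b" for v
        using m_max[of v] that \<open>a < m\<close> unfolding S_def by auto
      then have "{{x, b} | x. m \<le> x \<and> x + 2 \<le> b} \<subseteq> kpar2_diags N a b"
        using \<open>a < m\<close> by (auto intro!: kpar2_diagsI)
      then show ?thesis
        using tdiags_right_comb[of m "b - m"] \<open>m < b\<close> by simp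
    qed
    moreover have "{a, b} \<in> kpar2_diags N a b"
      using less.prems by (simp add: kpar2_diagsI)
    moreover have "tdiags a l \<subseteq> kpar2_diags N a b"
      using l(3) kpar2_diags_mono[of m b N a] \<open>m < b\<close> \<open>N m \<or> m = a + 1\<close> by blast
    ultimately have "tdiags a (Node l ?r) \<subseteq> kpar2_diags N a b"
      using l(2) \<open>a < m\<close> \<open>m < b\<close> by simp
    moreover have "kpar 2 (Node l ?r)" "leaves (Node l ?r) = b - a"
      using l \<open>a < m\<close> \<open>m < b\<close> kpar_1_right_comb[of "b - m"] by simp_all
    ultimately show ?thesis by blast
  qed
qed

text \<open>The diagonals of the right comb over the blocks between consecutive vertices
  satisfying K, starting at c.\<close>

definition kpar3_diags :: "(nat \<Rightarrow> bool) \<Rightarrow> (nat \<Rightarrow> bool) \<Rightarrow> nat \<Rightarrow> nat \<Rightarrow> nat set set" where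
  "kpar3_diags K N n c = {{v, n} | v. c \<le> v \<and> v < n \<and> (K v \<or> v = c)} \<union>
     \<Union>{kpar2_diags N a b | a b. c \<le> a \<and> a < b \<and> b < n \<and> K b \<and> (K a \<or> a = c) \<and>
         (\<forall>v. a < v \<and> v < b \<longrightarrow> \<not> K v)}"

lemma kpar3_diags_fanI:
  "c \<le> v \<Longrightarrow> v < n \<Longrightarrow> K v \<or> v = c \<Longrightarrow> {v, n} \<in> kpar3_diags K N n c"
  unfolding kpar3_diags_def by blast

lemma kpar3_diags_blockI:
  assumes "c \<le> a" "a < b" "b < n" "K b" "K a \<or> a = c" "\<And>v. a < v \<Longrightarrow> v < b \<Longrightarrow> \<not> K v"
  shows "kpar2_diags N a b \<subseteq> kpar3_diags K N n c"
  using assms unfolding kpar3_diags_def by blast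

lemma kpar3_diagsE:
  assumes "e \<in> kpar3_diags K N n c"
  obtains (fan) v where "e = {v, n}" "c \<le> v" "v < n" "K v \<or> v = c"
  | (block) a b where "e \<in> kpar2_diags N a b" "c \<le> a" "a < b" "b < n" "K b" "K a \<or> a = c"
      "\<And>v. a < v \<Longrightarrow> v < b \<Longrightarrow> \<not> K v"
  using assms unfolding kpar3_diags_def by blast

lemma kpar3_diags_mono:
  assumes "c < k" and "K k"
  shows "kpar3_diags K N n k \<subseteq> kpar3_diags K N n c"
proof
  fix e assume "e \<in> kpar3_diags K N n k"
  then show "e \<in> kpar3_diags K N n c"
  proof (cases rule: kpar3_diagsE)
    case (fan v)
    then show ?thesis
      using assms by (auto intro: kpar3_diags_fanI)
  next
    case (block a b)
    then show ?thesis
      using assms kpar3_diags_blockI[of c a b n K N] by auto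
  qed
qed

lemma kpar3_exists:
  assumes "c < n" and "K (n - 1)"
  shows "\<exists>t. kpar 3 t \<and> leaves t = n - c \<and> tdiags c t \<subseteq> kpar3_diags K N n c"
  using assms(1)
proof (induction "n - c" arbitrary: c rule: less_induct)
  case less
  show ?case
  proof (cases "c = n - 1")
    case True
    then show ?thesis using less.prems by (intro exI[of _ Leaf]) simp
  next
    case False
    define S where "S = {v. c < v \<and> v < n \<and> K v}"
    have "finite S" "n - 1 \<in> S"
      unfolding S_def using less.prems False assms(2) by auto
    define k where "k = Min S"
    have k_min: "k \<le> v" if "v \<in> S" for v
      using Min_le \<open>finite S\<close> that unfolding k_def by blast
    have "k \<in> S"
      using Min_in \<open>finite S\<close> \<open>n - 1 \<in> S\<close> unfolding k_def by blast
    then have "c < k" "k < n" "K k"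
      unfolding S_def by auto
    have "n - k < n - c"
      using \<open>c < k\<close> \<open>k < n\<close> by simp
    then obtain r where r: "kpar 3 r" "leaves r = n - k" "tdiags k r \<subseteq> kpar3_diags K N n k"
      using less.hyps \<open>k < n\<close> by blast
    obtain l where l: "kpar 2 l" "leaves l = k - c" "tdiags c l \<subseteq> kpar2_diags N c k"
      using kpar2_exists \<open>c < k\<close> by blast
    have "\<not> K v" if "c < v" "v < k" for v
      using k_min[of v] that \<open>k < n\<close> unfolding S_def by auto
    then have "kpar2_diags N c k \<subseteq> kpar3_diags K N n c"
      using \<open>c < k\<close> \<open>k < n\<close> \<open>K k\<close> by (simp add: kpar3_diags_blockI)
    moreover have "{c, n} \<in> kpar3_diags K N n c"
      using less.prems by (simp add: kpar3_diags_fanI)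
    ultimately have "tdiags c (Node l r) \<subseteq> kpar3_diags K N n c"
      using l r kpar3_diags_mono[of c k K N n] \<open>c < k\<close> \<open>k < n\<close> \<open>K k\<close> by auto
    moreover have "kpar 3 (Node l r)" "leaves (Node l r) = n - c"
      using l r \<open>c < k\<close> \<open>k < n\<close> by simp_all
    ultimately show ?thesis by blast
  qed
qed

lemma doubleton_eq_ordered:
  fixes i j p q :: "'a :: linorder"
  assumes "i < j" and "p < q"
  shows "{i, j} = {p, q} \<longleftrightarrow> i = p \<and> j = q"
  using assms by (auto simp: doubleton_eq_iff)

lemma crosses_doubleton_iff:
  assumes "i < j" and "i' < j'"
  shows "crosses {i, j} {i', j'} \<longleftrightarrow> (i < i' \<and> i' < j \<and> j < j') \<or> (i' < i \<and> i < j' \<and> j' < j)"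
proof
  assume "crosses {i, j} {i', j'}"
  then show "(i < i' \<and> i' < j \<and> j < j') \<or> (i' < i \<and> i < j' \<and> j' < j)"
    unfolding crosses_def using assms doubleton_eq_ordered by metis
next
  assume "(i < i' \<and> i' < j \<and> j < j') \<or> (i' < i \<and> i < j' \<and> j' < j)"
  then show "crosses {i, j} {i', j'}"
    unfolding crosses_def using assms by blast
qed

lemma dswap_if_not_crosses: "\<not> crosses d e \<Longrightarrow> dswap n d e"
  unfolding dswap_def by blast

lemma dswapI:
  "i' < i \<Longrightarrow> i < j' \<Longrightarrow> j' < j \<Longrightarrow> j < n \<Longrightarrow> j' - i > 1 \<Longrightarrow> dswap n {i, j} {i', j'}"
  unfolding dswap_def by (metis less_trans)

locale noncrossing =
  fixes n :: nat and T :: "nat set set"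
  assumes subset_Diag: "T \<subseteq> Diag n"
    and no_crossing: "d \<in> T \<Longrightarrow> e \<in> T \<Longrightarrow> \<not> crosses d e"
begin

text \<open>The vertex n - 1 is a fan vertex so that the last block ends at the last symbol.\<close>

definition fan_vertex :: "nat \<Rightarrow> bool" where
  "fan_vertex v \<longleftrightarrow> v = n - 1 \<or> {v, n} \<in> T"

definition split_vertex :: "nat \<Rightarrow> bool" where
  "split_vertex v \<longleftrightarrow> \<not> (\<exists>j > v. {v - 1, j} \<in> T)"

lemma diagE:
  assumes "d \<in> T"
  obtains i j where "d = {i, j}" "1 \<le> i" "i < j" "j \<le> n"
  using assms subset_Diag unfolding Diag_def by blast

lemma not_interleaved:
  assumes "{i, j} \<in> T" and "{p, q} \<in> T" and "i < p" and "p < j" and "j < q"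
  shows False
proof -
  have "crosses {i, j} {p, q}"
    using assms(3-5) crosses_doubleton_iff[of i j p q] by simp
  then show False
    using no_crossing assms(1,2) by blast
qed

lemma fan_diag_not_crosses:
  assumes "d \<in> T" and "fan_vertex v \<or> v = 1" and "v < n"
  shows "\<not> crosses d {v, n}"
proof
  assume "crosses d {v, n}"
  obtain i j where d: "d = {i, j}" "1 \<le> i" "i < j" "j \<le> n"
    using assms(1) by (rule diagE)
  with \<open>crosses d {v, n}\<close> have "i < v" "v < j" "j < n"
    using crosses_doubleton_iff[OF \<open>i < j\<close> \<open>v < n\<close>] by auto
  with assms(2) d(2) have "{v, n} \<in> T"
    unfolding fan_vertex_def by auto
  then show False
    using not_interleaved[of i j v n] assms(1) d(1) \<open>i < v\<close> \<open>v < j\<close> \<open>j < n\<close> by blast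
qed

lemma block_diag_not_crossed_from_left:
  assumes "{i, j} \<in> T" and "1 \<le> i" and "i < p" and "p < j" and "j < y" and "y < n"
    and "fan_vertex a \<or> a = 1"
    and "p = a \<or> (\<forall>v. p < v \<and> v < y \<longrightarrow> \<not> split_vertex v)"
  shows False
proof (cases "p = a")
  case True
  with assms(2-7) have "{a, n} \<in> T"
    unfolding fan_vertex_def by auto
  then show False
    using not_interleaved[of i j a n] assms(1,3-6) True by simp
next
  case False
  then obtain q where "{j - 1, q} \<in> T" "j < q"
    using assms(4,5,8) unfolding split_vertex_def by auto
  moreover have "i < j - 1" "j - 1 < j"
    using assms(3,4) by simp_all
  ultimately show False
    using not_interleaved[of i j "j - 1" q] assms(1) by blast
qed

lemma block_diag_crossed_from_right:
  assumes "{i, j} \<in> T" and "j \<le> n" and "a \<le> p" and "p < i" and "i < y" and "y < j"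
    and "y \<le> b" and "fan_vertex b" and "split_vertex y \<or> y = b \<or> y = p + 1"
    and no_fan: "\<And>v. a < v \<Longrightarrow> v < b \<Longrightarrow> \<not> fan_vertex v"
  shows "dswap n {i, j} {p, y}"
proof -
  have "j \<noteq> n"
  proof
    assume "j = n"
    then have "fan_vertex i"
      using assms(1) unfolding fan_vertex_def by simp
    then show False
      using no_fan[of i] assms(3-5,7) by simp
  qed
  with assms(2) have "j < n" by simp
  have "y \<noteq> i + 1"
  proof
    assume "y = i + 1"
    then have "\<not> split_vertex y"
      using assms(1,6) unfolding split_vertex_def by auto
    with assms(4,9) \<open>y = i + 1\<close> have "y = b" by auto
    with assms(5,6,8) \<open>j < n\<close> show False
      using not_interleaved[of i j b n] assms(1) unfolding fan_vertex_def by auto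
  qed
  with assms(4-6) \<open>j < n\<close> show ?thesis
    by (intro dswapI) auto
qed

lemma dswap_kpar2_diag:
  assumes "d \<in> T" and "e \<in> kpar2_diags split_vertex a b"
    and "fan_vertex a \<or> a = 1" and "fan_vertex b" and "b < n"
    and "\<And>v. a < v \<Longrightarrow> v < b \<Longrightarrow> \<not> fan_vertex v"
  shows "dswap n d e"
proof -
  obtain i j where d: "d = {i, j}" "1 \<le> i" "i < j" "j \<le> n"
    using assms(1) by (rule diagE)
  obtain p y where e: "e = {p, y}" "a \<le> p" "p < y" "y \<le> b"
    and y: "split_vertex y \<or> y = b \<or> y = p + 1"
    and p: "p = a \<or> (\<forall>v. p < v \<and> v < y \<longrightarrow> \<not> split_vertex v)"
    using assms(2) unfolding kpar2_diags_def by blast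
  consider "\<not> crosses d e" | "i < p" "p < j" "j < y" | "p < i" "i < y" "y < j"
    using crosses_doubleton_iff[OF \<open>i < j\<close> \<open>p < y\<close>] d(1) e(1) by blast
  then show ?thesis
  proof cases
    case 1
    then show ?thesis by (rule dswap_if_not_crosses)
  next
    case 2
    with e(4) \<open>b < n\<close> have "y < n" by simp
    then have False
      using block_diag_not_crossed_from_left[OF _ d(2) 2 _ assms(3) p] assms(1) d(1) by simp
    then show ?thesis ..
  next
    case 3
    then show ?thesis
      using block_diag_crossed_from_right[OF _ d(4) e(2) 3 e(4) assms(4) y assms(6)]
        assms(1) d(1) e(1) by simp
  qed
qed

lemma dswap_kpar3_diag:
  assumes "d \<in> T" and "e \<in> kpar3_diags fan_vertex split_vertex n 1"
  shows "dswap n d e"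
  using assms(2)
proof (cases rule: kpar3_diagsE)
  case (fan v)
  then show ?thesis
    using fan_diag_not_crosses[OF assms(1)] dswap_if_not_crosses by simp
next
  case (block a b)
  then show ?thesis
    using dswap_kpar2_diag[OF assms(1)] by blast
qed

end

theorem lemma3p8:
  fixes n :: nat and T :: "nat set set"
  assumes "n \<ge> 3" and "T \<in> triangulations n"
  shows "\<exists>T' \<in> ktriangulations 3 n. tswap n T T'"
proof -
  interpret noncrossing n T
    using assms(2) by unfold_locales (auto simp: triangulations_def)
  have "1 < n" and "fan_vertex (n - 1)"
    using assms(1) by (simp_all add: fan_vertex_def)
  then obtain t where t: "kpar 3 t" "leaves t = n - 1"
    and diags: "tdiags 1 t \<subseteq> kpar3_diags fan_vertex split_vertex n 1"
    using kpar3_exists by blast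
  then have "tri_of t \<in> ktriangulations 3 n"
    unfolding ktriangulations_def by blast
  moreover have "tswap n T (tri_of t)"
    using diags dswap_kpar3_diag unfolding tswap_def tri_of_def by blast
  ultimately show ?thesis by blast
qed

end
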